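(* For every $h\in R$, the binary representation of $h$ does not contain $10000$ as a contiguous substring.
   Context: Stern's sequence $(a(n))_{n\ge0}$: $a(0)=0$, $a(1)=1$, $a(2n)=a(n)$, $a(2n+1)=a(n)+a(n+1)$; $s(n)=a(n+1)$ for $n\ge0$. $R$ is the set of record-setters of $s$, i.e. indices $v\ge0$ with $s(i)<s(v)$ for all $i<v$. The binary representation of a positive integer has no leading zeros; $0$ is represented by the string $0$. *)

theory Defs
  imports Main "HOL-Library.Sublist"
begin

function stern :: "nat \<Rightarrow> nat" where
  "stern n = (if n = 0 then 0 else if n = 1 then 1
     else if even n then stern (n div 2)
     else stern (n div 2) + stern (n div 2 + 1))"
  by auto
termination
  by (relation "measure id") (auto elim!: oddE)

definition s :: "nat \<Rightarrow> nat" where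
  "s n = stern (n + 1)"

definition R :: "nat set" where
  "R = {v. \<forall>i<v. s i < s v}"

fun bin_aux :: "nat \<Rightarrow> nat list" where
  "bin_aux n = (if n = 0 then [] else bin_aux (n div 2) @ [n mod 2])"

definition bin :: "nat \<Rightarrow> nat list" where
  "bin n = (if n = 0 then [0] else bin_aux n)"

end

theory Submission
  imports Defs
begin

text \<open>If the binary representation of h contains 10000, replace that block by 01100. This gives a
  smaller index i. Both one-digit extension steps (a(n), a(n+1)) \<mapsto> (a(2n), a(2n+1)) and
  (a(n), a(n+1)) \<mapsto> (a(2n+1), a(2n+2)) are monotone in the pair, so it suffices that the pair at
  the prefix ending in 01100 dominates the pair at the prefix ending in 10000; with x = a(A),
  y = a(A+1) these pairs are (3x+2y, 7x+5y) and (x+y, 4x+5y). Hence s(i) \<ge> s(h), and h is no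
  record-setter.\<close>

declare stern.simps[simp del] bin_aux.simps[simp del]

lemma stern_0: "stern 0 = 0"
  by (subst stern.simps) simp

lemma stern_double: "stern (2*n) = stern n"
  by (subst stern.simps) (auto simp: stern_0)

lemma stern_double_Suc: "stern (Suc (2*n)) = stern n + stern (Suc n)"
proof (cases "n = 0")
  case True
  then show ?thesis by (simp add: stern_0)
next
  case False
  then show ?thesis by (subst stern.simps) auto
qed

lemma stern_double_Suc_Suc: "stern (Suc (Suc (2*n))) = stern (Suc n)"
  using stern_double[of "Suc n"] by simp

lemma stern_pair_le_append_bit:
  assumes "stern M \<le> stern M'" "stern (M+1) \<le> stern (M'+1)" "b < 2"
  shows "stern (2*M+b) \<le> stern (2*M'+b) \<and> stern (2*M+b+1) \<le> stern (2*M'+b+1)"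
proof -
  have "b = 0 \<or> b = 1" using \<open>b < 2\<close> by auto
  then show ?thesis
    using assms(1,2) by (auto simp: stern_double stern_double_Suc stern_double_Suc_Suc)
qed

lemma stern_pair_le_append_bits:
  assumes "B < 2^k" "stern M \<le> stern M'" "stern (M+1) \<le> stern (M'+1)"
  shows "stern (M*2^k+B) \<le> stern (M'*2^k+B) \<and> stern (M*2^k+B+1) \<le> stern (M'*2^k+B+1)"
  using assms
proof (induction k arbitrary: M M' B)
  case 0
  then show ?case by simp
next
  case (Suc k)
  define b where "b = B div 2^k"
  define C where "C = B mod 2^k"
  have "b < 2"
    using Suc.prems(1) by (simp add: b_def less_mult_imp_div_less mult.commute)
  have shift: "X*2^Suc k + B = (2*X+b)*2^k + C" for X
    using div_mult_mod_eq[of B "2^k"] by (simp add: b_def C_def algebra_simps)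
  have "stern (2*M+b) \<le> stern (2*M'+b) \<and> stern (2*M+b+1) \<le> stern (2*M'+b+1)"
    using stern_pair_le_append_bit[OF Suc.prems(2,3) \<open>b < 2\<close>] .
  then show ?case
    unfolding shift using Suc.IH[of C] by (simp add: C_def)
qed

lemma stern_eq_double: "m = 2*n \<Longrightarrow> stern m = stern n"
  by (simp add: stern_double)

lemma stern_eq_double_plus_1: "m = 2*n+1 \<Longrightarrow> n' = n+1 \<Longrightarrow> stern m = stern n + stern n'"
  by (simp add: stern_double_Suc)

lemma stern_pair_01100_ge_10000:
  "stern (32*A+16) \<le> stern (32*A+12) \<and> stern (32*A+17) \<le> stern (32*A+13)"
proof -
  define x where "x = stern A"
  define y where "y = stern (A+1)"
  have "stern (2*A) = x" "stern (2*A+1) = x+y" "stern (2*A+2) = y"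
    using stern_eq_double[of "2*A" A] stern_eq_double_plus_1[of "2*A+1" A "A+1"]
      stern_eq_double[of "2*A+2" "A+1"]
    by (simp_all add: x_def y_def)
  then have "stern (4*A+1) = 2*x+y" "stern (4*A+2) = x+y" "stern (4*A+3) = x+2*y"
    using stern_eq_double_plus_1[of "4*A+1" "2*A" "2*A+1"] stern_eq_double[of "4*A+2" "2*A+1"]
      stern_eq_double_plus_1[of "4*A+3" "2*A+1" "2*A+2"]
    by simp_all
  then have "stern (8*A+3) = 3*x+2*y" "stern (8*A+4) = x+y" "stern (8*A+5) = 2*x+3*y"
    using stern_eq_double_plus_1[of "8*A+3" "4*A+1" "4*A+2"] stern_eq_double[of "8*A+4" "4*A+2"]
      stern_eq_double_plus_1[of "8*A+5" "4*A+2" "4*A+3"]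
    by simp_all
  then have "stern (16*A+6) = 3*x+2*y" "stern (16*A+7) = 4*x+3*y"
      "stern (16*A+8) = x+y" "stern (16*A+9) = 3*x+4*y"
    using stern_eq_double[of "16*A+6" "8*A+3"] stern_eq_double_plus_1[of "16*A+7" "8*A+3" "8*A+4"]
      stern_eq_double[of "16*A+8" "8*A+4"] stern_eq_double_plus_1[of "16*A+9" "8*A+4" "8*A+5"]
    by simp_all
  then have "stern (32*A+12) = 3*x+2*y" "stern (32*A+13) = 7*x+5*y"
      "stern (32*A+16) = x+y" "stern (32*A+17) = 4*x+5*y"
    using stern_eq_double[of "32*A+12" "16*A+6"]
      stern_eq_double_plus_1[of "32*A+13" "16*A+6" "16*A+7"]
      stern_eq_double[of "32*A+16" "16*A+8"]
      stern_eq_double_plus_1[of "32*A+17" "16*A+8" "16*A+9"]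
    by simp_all
  then show ?thesis by simp
qed

lemma s_10000_le_01100:
  assumes "B < 2^k"
  shows "s ((32*A+16)*2^k+B) \<le> s ((32*A+12)*2^k+B)"
  using stern_pair_le_append_bits[OF assms, of "32*A+16" "32*A+12"] stern_pair_01100_ge_10000[of A]
  by (simp add: s_def algebra_simps)

definition bin_value :: "nat list \<Rightarrow> nat" where
  "bin_value ds = foldl (\<lambda>acc d. 2*acc+d) 0 ds"

lemma foldl_bin_step: "foldl (\<lambda>acc d. 2*acc+d) a ds = a*2^length ds + bin_value ds"
  by (induction ds rule: rev_induct) (simp_all add: bin_value_def algebra_simps)

lemma bin_value_append: "bin_value (xs @ ys) = bin_value xs * 2^length ys + bin_value ys"
  unfolding bin_value_def foldl_append by (rule foldl_bin_step[unfolded bin_value_def])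

lemma bin_value_less: "set ds \<subseteq> {0,1} \<Longrightarrow> bin_value ds < 2^length ds"
  by (induction ds rule: rev_induct) (auto simp: bin_value_def)

lemma bin_aux_pos: "n > 0 \<Longrightarrow> bin_aux n = bin_aux (n div 2) @ [n mod 2]"
  by (subst bin_aux.simps) simp

lemma bin_aux_0: "bin_aux 0 = []"
  by (subst bin_aux.simps) simp

lemma bin_value_bin: "bin_value (bin n) = n"
proof (induction n rule: bin_aux.induct)
  case (1 n)
  then show ?case
    by (cases "n = 0")
      (auto simp: bin_def bin_value_def bin_aux_pos bin_aux_0 split: if_splits)
qed

lemma set_bin_subset: "set (bin n) \<subseteq> {0,1}"
proof (induction n rule: bin_aux.induct)
  case (1 n)
  then show ?case
    by (cases "n = 0") (auto simp: bin_def bin_aux_pos bin_aux_0 split: if_splits)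
qed

lemma sublist_bin_decomp:
  assumes "sublist ws (bin n)"
  obtains A k B where "B < 2^k" "n = (A * 2^length ws + bin_value ws) * 2^k + B"
proof -
  obtain xs ys where bin_n: "bin n = xs @ ws @ ys"
    using assms unfolding sublist_def by blast
  have "bin_value ys < 2^length ys"
    using bin_value_less set_bin_subset[of n] unfolding bin_n by auto
  moreover have "n = (bin_value xs * 2^length ws + bin_value ws) * 2^length ys + bin_value ys"
    using bin_value_bin[of n] unfolding bin_n by (simp add: bin_value_append power_add algebra_simps)
  ultimately show thesis using that by blast
qed

theorem mainTheorem7:
  shows "\<forall>h\<in>R. \<not> sublist [1, 0, 0, 0, 0] (bin h)"
proof (intro ballI notI)
  fix h assume "h \<in> R" and "sublist [1, 0, 0, 0, 0] (bin h)"
  then obtain A k B where "B < 2^k"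
    and "h = (A * 2^length [1,0,0,0,0::nat] + bin_value [1,0,0,0,0]) * 2^k + B"
    using sublist_bin_decomp by blast
  then have h: "h = (32*A+16)*2^k + B" by (simp add: bin_value_def)
  define i where "i = (32*A+12)*2^k + B"
  have "i < h" unfolding h i_def by simp
  then have "s i < s h" using \<open>h \<in> R\<close> unfolding R_def by blast
  moreover have "s h \<le> s i" unfolding h i_def using s_10000_le_01100[OF \<open>B < 2^k\<close>] .
  ultimately show False by simp
qed

end
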